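(* Assume the standing setup and let $F$ be a facet of $\Delta$. Then for each $q$, $\overline H^q(\Delta)$ has a basis consisting of images of monomials in $K[\Delta]$ whose support is disjoint from $F$.
   Context: Standing setup. $k$ is a field, $d\ge 2$ is an integer, and $\Delta$ is a connected oriented simplicial $k$-homology manifold of dimension $d-1$ with vertex set $V=\{1,\dots,n\}$ (connected, links of nonempty faces $G$ have the $k$-homology of spheres of dimension $d-|G|-1$; facets carry compatible orientations giving signs $\epsilon_F\in\{\pm1\}$, all $1$ in characteristic $2$). Let $K=k(a_{i,j}:1\le i\le d,\ 1\le j\le n)$ with independent indeterminates, $K[\Delta]$ the Stanley–Reisner ring over $K$ in variables $x_1,\dots,x_n$, $\theta_i=\sum_ja_{i,j}x_j$, $H(\Delta)=K[\Delta]/(\theta_1,\dots,\theta_d)$, $\deg:H^d(\Delta)\to K$ the isomorphism with $\deg(x_G)=\epsilon_G/[G]$ for facets $G$ ($x_G=\prod_{j\in G}x_j$, $[G]$ the determinant of the $d\times d$ matrix $(a_{i,j_m})$ for $G=\{j_1<\dots<j_d\}$), and $\overline H(\Delta)$ the Gorenstein quotient of $H(\Delta)$ by the ideal of $y$ with $\deg(yz)=0$ for all $z$, with graded pieces $\overline H^q(\Delta)$. The support of a nonzero monomial $x_{j_1}^{b_1}\cdots x_{j_s}^{b_s}$ with all $b_m>0$ is the set $\{j_1,\dots,j_s\}$. *)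

theory Defs
  imports "HOL-Library.Poly_Mapping" "HOL-Library.Product_Lexorder" "HOL-Library.Function_Algebras"
    "HOL-Computational_Algebra.Fraction_Field" "Jordan_Normal_Form.Determinant"
begin

text \<open>k[a_ij]: polynomials over k in the indeterminates a_(i,j) (exponent vectors indexed by pairs);
  K is its fraction field, i.e. the rational function field k(a_ij).\<close>
type_synonym 'k coeffpoly = "((nat \<times> nat) \<Rightarrow>\<^sub>0 nat) \<Rightarrow>\<^sub>0 'k"
type_synonym 'k KK = "'k coeffpoly fract"

type_synonym 'K pol = "(nat \<Rightarrow>\<^sub>0 nat) \<Rightarrow>\<^sub>0 'K"

definition indet :: "nat \<Rightarrow> nat \<Rightarrow> 'k::field KK" where
  "indet i j = Fract (Poly_Mapping.single (Poly_Mapping.single (i, j) 1) 1) 1"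

definition const_pol :: "'K::comm_ring_1 \<Rightarrow> 'K pol" where
  "const_pol c = Poly_Mapping.single 0 c"

definition var :: "nat \<Rightarrow> 'K::comm_ring_1 pol" where
  "var j = Poly_Mapping.single (Poly_Mapping.single j 1) 1"

definition monom :: "(nat \<Rightarrow>\<^sub>0 nat) \<Rightarrow> 'K::comm_ring_1 pol" where
  "monom m = Poly_Mapping.single m 1"

definition mdeg :: "(nat \<Rightarrow>\<^sub>0 nat) \<Rightarrow> nat" where
  "mdeg m = (\<Sum>v\<in>Poly_Mapping.keys m. Poly_Mapping.lookup m v)"

definition supp :: "(nat \<Rightarrow>\<^sub>0 nat) \<Rightarrow> nat set" where
  "supp m = Poly_Mapping.keys m"

definition homog :: "nat \<Rightarrow> 'K::comm_ring_1 pol \<Rightarrow> bool" where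
  "homog q p \<longleftrightarrow> (\<forall>m\<in>Poly_Mapping.keys p. mdeg m = q)"

definition hcomp :: "nat \<Rightarrow> 'K::comm_ring_1 pol \<Rightarrow> 'K pol" where
  "hcomp q p = (\<Sum>m\<in>{m\<in>Poly_Mapping.keys p. mdeg m = q}. Poly_Mapping.single m (Poly_Mapping.lookup p m))"

definition xG :: "nat set \<Rightarrow> 'K::comm_ring_1 pol" where
  "xG G = (\<Prod>j\<in>G. var j)"

definition simplicial_complex :: "nat \<Rightarrow> nat set set \<Rightarrow> bool" where
  "simplicial_complex n \<Delta> \<longleftrightarrow> {} \<in> \<Delta> \<and> (\<forall>F\<in>\<Delta>. F \<subseteq> {1..n})
     \<and> (\<forall>F\<in>\<Delta>. \<forall>G. G \<subseteq> F \<longrightarrow> G \<in> \<Delta>) \<and> (\<forall>j\<in>{1..n}. {j} \<in> \<Delta>)"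

definition facet :: "nat set set \<Rightarrow> nat set \<Rightarrow> bool" where
  "facet \<Delta> F \<longleftrightarrow> F \<in> \<Delta> \<and> (\<forall>G\<in>\<Delta>. F \<subseteq> G \<longrightarrow> G = F)"

definition link :: "nat set set \<Rightarrow> nat set \<Rightarrow> nat set set" where
  "link \<Delta> G = {H\<in>\<Delta>. H \<inter> G = {} \<and> H \<union> G \<in> \<Delta>}"

definition connected_complex :: "nat \<Rightarrow> nat set set \<Rightarrow> bool" where
  "connected_complex n \<Delta> \<longleftrightarrow> n \<ge> 1 \<and>
     (\<forall>i\<in>{1..n}. \<forall>j\<in>{1..n}. (i, j) \<in> {(u, v). {u, v} \<in> \<Delta>}\<^sup>*)"

text \<open>Reduced simplicial chains with coefficients in k, indexed by face size s
  (size s = dimension s-1; size 0 is the empty face, giving reduced homology).\<close>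
definition chains :: "'k::field itself \<Rightarrow> nat set set \<Rightarrow> nat \<Rightarrow> (nat set \<Rightarrow> 'k) set" where
  "chains _ L s = {c. \<forall>H. c H \<noteq> 0 \<longrightarrow> H \<in> L \<and> card H = s}"

text \<open>boundary: the face H \<union> {v} = {j_0 < ... < j_s} maps to sum of (-1)^m [without j_m]\<close>
definition bd :: "nat set set \<Rightarrow> (nat set \<Rightarrow> 'k::field) \<Rightarrow> (nat set \<Rightarrow> 'k)" where
  "bd L c = (\<lambda>H. if H \<in> L then
      (\<Sum>v\<in>{v. v \<notin> H \<and> insert v H \<in> L}. of_int ((-1) ^ card {u\<in>H. u < v}) * c (insert v H))
     else 0)"

definition fscale :: "'k::field \<Rightarrow> (nat set \<Rightarrow> 'k) \<Rightarrow> (nat set \<Rightarrow> 'k)" where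
  "fscale a f = (\<lambda>x. a * f x)"

text \<open>dimension over k of the reduced homology of L in dimension s-1\<close>
definition hdim :: "'k::field itself \<Rightarrow> nat set set \<Rightarrow> nat \<Rightarrow> nat" where
  "hdim T L s =
     vector_space.dim (fscale :: 'k \<Rightarrow> _) {c\<in>chains T L s. bd L c = (\<lambda>_. 0)}
     - vector_space.dim (fscale :: 'k \<Rightarrow> _) (bd L ` chains T L (Suc s))"

text \<open>connected k-homology manifold of dimension d-1: links of nonempty faces G have the
  k-homology of a (d - |G| - 1)-sphere (size index d - |G|)\<close>
definition homology_manifold :: "'k::field itself \<Rightarrow> nat \<Rightarrow> nat \<Rightarrow> nat set set \<Rightarrow> bool" where
  "homology_manifold T d n \<Delta> \<longleftrightarrow> simplicial_complex n \<Delta> \<and> connected_complex n \<Delta>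
     \<and> (\<forall>G\<in>\<Delta>. card G \<le> d) \<and> (\<exists>G\<in>\<Delta>. card G = d)
     \<and> (\<forall>G\<in>\<Delta>. G \<noteq> {} \<longrightarrow> (\<forall>s. hdim T (link \<Delta> G) s = (if s = d - card G then 1 else 0)))"

text \<open>compatible orientation signs on facets (a k-fundamental cycle); all 1 in characteristic 2\<close>
definition oriented :: "'k::field itself \<Rightarrow> nat \<Rightarrow> nat set set \<Rightarrow> (nat set \<Rightarrow> int) \<Rightarrow> bool" where
  "oriented T d \<Delta> eps \<longleftrightarrow>
     (\<forall>G. facet \<Delta> G \<longrightarrow> eps G \<in> {1, -1}) \<and>
     (CHAR('k) = 2 \<longrightarrow> (\<forall>G. facet \<Delta> G \<longrightarrow> eps G = 1)) \<and>
     (\<forall>R\<in>\<Delta>. card R + 1 = d \<longrightarrow>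
        (of_int (\<Sum>v\<in>{v. v \<notin> R \<and> insert v R \<in> \<Delta>}.
            eps (insert v R) * (-1) ^ card {u\<in>R. u < v}) :: 'k) = 0)"

definition theta :: "nat \<Rightarrow> nat \<Rightarrow> ('k::field KK) pol" where
  "theta n i = (\<Sum>j=1..n. const_pol (indet i j) * var j)"

definition bracket :: "nat \<Rightarrow> nat set \<Rightarrow> 'k::field KK" where
  "bracket d G = det (mat d d (\<lambda>(i, m). indet (i + 1) (sorted_list_of_set G ! m)))"

text \<open>membership in I_Delta + (theta_1, ..., theta_d), where I_Delta is spanned by monomials
  whose support is not a face\<close>
definition in_I :: "'k::field itself \<Rightarrow> nat \<Rightarrow> nat \<Rightarrow> nat set set \<Rightarrow> ('k KK) pol \<Rightarrow> bool" where
  "in_I _ n d \<Delta> p \<longleftrightarrow> (\<exists>g :: nat \<Rightarrow> ('k KK) pol.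
      \<forall>m\<in>Poly_Mapping.keys (p - (\<Sum>i=1..d. theta n i * g i)). supp m \<notin> \<Delta>)"

text \<open>the ideal defining the Gorenstein quotient (pulled back to the polynomial ring):
  y with deg(yz) = 0 for all z, deg applied to the degree-d component\<close>
definition gor :: "nat \<Rightarrow> (('k::field KK) pol \<Rightarrow> 'k KK) \<Rightarrow> ('k KK) pol \<Rightarrow> bool" where
  "gor d deg y \<longleftrightarrow> (\<forall>z. deg (hcomp d (y * z)) = 0)"

end

theory Submission
  imports Defs
begin

text \<open>
  For a face \<open>F\<close> with \<open>|F| \<le> d\<close> the columns of the generic matrix \<open>(a_ij)\<close> indexed by \<open>F\<close> are
  linearly independent, so for each \<open>j \<in> F\<close> some combination of \<open>\<theta>_1, \<dots>, \<theta>_d\<close> equals \<open>x_j\<close> plus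
  a linear form in the variables outside \<open>F\<close>. Rewriting with these relations lowers the degree of a
  monomial in the variables of \<open>F\<close>, and monomials whose support is not a face lie in \<open>I_\<Delta>\<close>. Hence
  modulo \<open>I_\<Delta> + (\<theta>)\<close>, and a fortiori modulo the ideal defining the Gorenstein quotient, every form
  of degree \<open>q\<close> is a combination of the finitely many monomials of degree \<open>q\<close> supported on faces
  disjoint from \<open>F\<close>; a largest subfamily independent in the quotient is a basis. Of the hypotheses only
  the following are used: \<open>\<Delta>\<close> is a simplicial complex with faces of size at most \<open>d\<close>, \<open>F \<in> \<Delta>\<close>,
  and \<open>deg\<close> is linear with kernel \<open>I_\<Delta> + (\<theta>)\<close> in degree \<open>d\<close>.
\<close>

lemma poly_mapping_sum_single_keys:
  "(p::'a \<Rightarrow>\<^sub>0 'b::comm_monoid_add) = (\<Sum>m\<in>Poly_Mapping.keys p. Poly_Mapping.single m (Poly_Mapping.lookup p m))"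
  by (rule poly_mapping_eqI) (simp add: lookup_sum lookup_single when_def in_keys_iff)

lemma mdeg_eq_sum:
  assumes "finite A" "Poly_Mapping.keys m \<subseteq> A"
  shows "mdeg m = (\<Sum>v\<in>A. Poly_Mapping.lookup m v)"
  unfolding mdeg_def using assms by (intro sum.mono_neutral_left) (auto simp: in_keys_iff)

lemma mdeg_add: "mdeg (a + b) = mdeg a + mdeg b"
proof -
  let ?A = "Poly_Mapping.keys a \<union> Poly_Mapping.keys b"
  have "mdeg (a + b) = (\<Sum>v\<in>?A. Poly_Mapping.lookup (a + b) v)"
    by (rule mdeg_eq_sum) (auto simp: keys_add)
  also have "\<dots> = (\<Sum>v\<in>?A. Poly_Mapping.lookup a v) + (\<Sum>v\<in>?A. Poly_Mapping.lookup b v)"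
    by (simp add: lookup_add sum.distrib)
  also have "\<dots> = mdeg a + mdeg b"
    using mdeg_eq_sum[of ?A a] mdeg_eq_sum[of ?A b] by simp
  finally show ?thesis .
qed

lemma mdeg_single [simp]: "mdeg (Poly_Mapping.single j k) = k"
  by (cases "k = 0") (simp_all add: mdeg_def)

lemma mdeg_0 [simp]: "mdeg 0 = 0"
  by (simp add: mdeg_def)

lemma lookup_le_mdeg: "Poly_Mapping.lookup m i \<le> mdeg m"
  by (cases "i \<in> Poly_Mapping.keys m") (auto simp: mdeg_def in_keys_iff intro: member_le_sum)

lemma supp_add: "supp (a + b) = supp a \<union> supp b"
  by (auto simp: supp_def in_keys_iff lookup_add)

lemma lookup_hcomp:
  "Poly_Mapping.lookup (hcomp q p) m = (if mdeg m = q then Poly_Mapping.lookup p m else 0)"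
  unfolding hcomp_def by (simp add: lookup_sum lookup_single when_def in_keys_iff)

lemma keys_hcomp: "Poly_Mapping.keys (hcomp q p) \<subseteq> Poly_Mapping.keys p"
  by (auto simp: in_keys_iff lookup_hcomp split: if_splits)

lemma homog_hcomp: "homog q (hcomp q p)"
  unfolding homog_def by (auto simp: in_keys_iff lookup_hcomp split: if_splits)

lemma hcomp_add: "hcomp q (p + p') = hcomp q p + hcomp q p'"
  by (rule poly_mapping_eqI) (simp add: lookup_hcomp lookup_add)

lemma hcomp_diff: "hcomp q (p - p') = hcomp q p - hcomp q p'"
  by (rule poly_mapping_eqI) (simp add: lookup_hcomp lookup_minus)

lemma hcomp_0 [simp]: "hcomp q 0 = 0"
  by (rule poly_mapping_eqI) (simp add: lookup_hcomp)

lemma hcomp_sum: "hcomp q (\<Sum>i\<in>I. f i) = (\<Sum>i\<in>I. hcomp q (f i))"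
  by (induction I rule: infinite_finite_induct) (simp_all add: hcomp_add)

lemma const_pol_0 [simp]: "const_pol 0 = 0"
  by (simp add: const_pol_def)

lemma const_pol_1 [simp]: "const_pol 1 = 1"
  by (simp add: const_pol_def)

lemma const_pol_add: "const_pol (a + b) = const_pol a + (const_pol b :: 'K::comm_ring_1 pol)"
  by (simp add: const_pol_def single_add)

lemma const_pol_mult: "const_pol (a * b) = const_pol a * (const_pol b :: 'K::comm_ring_1 pol)"
  by (simp add: const_pol_def mult_single)

lemma const_pol_uminus: "const_pol (- a) = - (const_pol a :: 'K::comm_ring_1 pol)"
  by (simp add: const_pol_def single_uminus)

lemma const_pol_sum: "const_pol (\<Sum>i\<in>I. f i) = (\<Sum>i\<in>I. const_pol (f i) :: 'K::comm_ring_1 pol)"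
  by (induction I rule: infinite_finite_induct) (simp_all add: const_pol_add)

lemma const_pol_mult_var: "const_pol c * var j = Poly_Mapping.single (Poly_Mapping.single j 1) c"
  by (simp add: const_pol_def var_def mult_single)

lemma monom_add: "monom (a + b) = (monom a * monom b :: 'K::comm_ring_1 pol)"
  by (simp add: monom_def mult_single)

lemma var_eq_monom: "var j = monom (Poly_Mapping.single j 1)"
  by (simp add: var_def monom_def)

lemma pol_eq_sum_monoms:
  "p = (\<Sum>m\<in>Poly_Mapping.keys p. const_pol (Poly_Mapping.lookup p m) * monom m)"
  by (subst poly_mapping_sum_single_keys[of p]) (simp add: const_pol_def monom_def mult_single)

lemma hcomp_single:
  "hcomp q (Poly_Mapping.single m c) = (if mdeg m = q then Poly_Mapping.single m c else 0)"
  by (rule poly_mapping_eqI) (simp add: lookup_hcomp lookup_single when_def)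

lemma hcomp_single_mult:
  assumes "mdeg a \<le> q"
  shows "hcomp q (Poly_Mapping.single a c * g) =
    Poly_Mapping.single a c * hcomp (q - mdeg a) (g :: 'K::comm_ring_1 pol)"
proof -
  let ?t = "\<lambda>m. Poly_Mapping.single m (Poly_Mapping.lookup g m)"
  have "hcomp q (Poly_Mapping.single a c * g) =
      (\<Sum>m\<in>Poly_Mapping.keys g. hcomp q (Poly_Mapping.single a c * ?t m))"
    by (subst poly_mapping_sum_single_keys[of g]) (simp add: sum_distrib_left hcomp_sum)
  also have "\<dots> = (\<Sum>m\<in>Poly_Mapping.keys g. Poly_Mapping.single a c * hcomp (q - mdeg a) (?t m))"
    using assms by (intro sum.cong refl) (auto simp: mult_single hcomp_single mdeg_add)
  also have "\<dots> = Poly_Mapping.single a c * hcomp (q - mdeg a) g"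
    by (subst (2) poly_mapping_sum_single_keys[of g]) (simp add: sum_distrib_left hcomp_sum)
  finally show ?thesis .
qed

lemma hcomp_const_pol_mult: "hcomp q (const_pol c * p) = const_pol c * hcomp q p"
  unfolding const_pol_def using hcomp_single_mult[of 0 q c p] by simp

lemma hcomp_theta_mult:
  assumes "q \<ge> 1"
  shows "hcomp q (theta n i * g) = theta n i * hcomp (q - 1) g"
  unfolding theta_def sum_distrib_right hcomp_sum const_pol_mult_var
proof (intro sum.cong refl)
  fix j
  show "hcomp q (Poly_Mapping.single (Poly_Mapping.single j 1) (indet i j) * g) =
      Poly_Mapping.single (Poly_Mapping.single j 1) (indet i j) * hcomp (q - 1) g"
    using hcomp_single_mult[of "Poly_Mapping.single j 1" q "indet i j" g] assms by simp
qed

section \<open>Spans modulo a subspace\<close>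

definition pol_subspace :: "('K::field pol \<Rightarrow> bool) \<Rightarrow> bool" where
  "pol_subspace W \<longleftrightarrow> W 0 \<and> (\<forall>a b. W a \<longrightarrow> W b \<longrightarrow> W (a + b)) \<and> (\<forall>c a. W a \<longrightarrow> W (const_pol c * a))"

definition span_mod :: "('K::field pol \<Rightarrow> bool) \<Rightarrow> 'a set \<Rightarrow> ('a \<Rightarrow> 'K pol) \<Rightarrow> 'K pol \<Rightarrow> bool" where
  "span_mod W S v y \<longleftrightarrow> (\<exists>c. W (y - (\<Sum>s\<in>S. const_pol (c s) * v s)))"

definition independent_mod :: "('K::field pol \<Rightarrow> bool) \<Rightarrow> 'a set \<Rightarrow> ('a \<Rightarrow> 'K pol) \<Rightarrow> bool" where
  "independent_mod W B v \<longleftrightarrow> (\<forall>c. W (\<Sum>m\<in>B. const_pol (c m) * v m) \<longrightarrow> (\<forall>m\<in>B. c m = 0))"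

context
  fixes W :: "'K::field pol \<Rightarrow> bool"
  assumes W: "pol_subspace W"
begin

lemma subspace_0: "W 0"
  using W by (simp add: pol_subspace_def)

lemma subspace_add: "W a \<Longrightarrow> W b \<Longrightarrow> W (a + b)"
  using W by (simp add: pol_subspace_def)

lemma subspace_const_pol_mult: "W a \<Longrightarrow> W (const_pol c * a)"
  using W by (simp add: pol_subspace_def)

lemma span_mod_subspace: "W y \<Longrightarrow> span_mod W S v y"
  unfolding span_mod_def by (rule exI[of _ "\<lambda>_. 0"]) simp

lemma span_mod_add:
  assumes "span_mod W S v y1" "span_mod W S v y2"
  shows "span_mod W S v (y1 + y2)"
proof -
  obtain c1 where c1: "W (y1 - (\<Sum>s\<in>S. const_pol (c1 s) * v s))"
    using assms(1) unfolding span_mod_def by blast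
  obtain c2 where c2: "W (y2 - (\<Sum>s\<in>S. const_pol (c2 s) * v s))"
    using assms(2) unfolding span_mod_def by blast
  have "y1 + y2 - (\<Sum>s\<in>S. const_pol (c1 s + c2 s) * v s) =
      (y1 - (\<Sum>s\<in>S. const_pol (c1 s) * v s)) + (y2 - (\<Sum>s\<in>S. const_pol (c2 s) * v s))"
    by (simp add: const_pol_add distrib_right sum.distrib)
  also have "W \<dots>"
    using c1 c2 by (rule subspace_add)
  finally show ?thesis
    unfolding span_mod_def by (rule exI[of _ "\<lambda>s. c1 s + c2 s"])
qed

lemma span_mod_const_pol_mult:
  assumes "span_mod W S v y"
  shows "span_mod W S v (const_pol a * y)"
proof -
  obtain c where c: "W (y - (\<Sum>s\<in>S. const_pol (c s) * v s))"
    using assms unfolding span_mod_def by blast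
  have "const_pol a * y - (\<Sum>s\<in>S. const_pol (a * c s) * v s) =
      const_pol a * (y - (\<Sum>s\<in>S. const_pol (c s) * v s))"
    by (simp add: right_diff_distrib sum_distrib_left const_pol_mult mult.assoc)
  also have "W \<dots>"
    using c by (rule subspace_const_pol_mult)
  finally show ?thesis
    unfolding span_mod_def by (rule exI[of _ "\<lambda>s. a * c s"])
qed

lemma span_mod_of_diff:
  assumes "W (y - y')" "span_mod W S v y'"
  shows "span_mod W S v y"
proof -
  have "span_mod W S v ((y - y') + y')"
    by (rule span_mod_add[OF span_mod_subspace[OF assms(1)] assms(2)])
  then show ?thesis by simp
qed

lemma span_mod_sum: "(\<And>i. i \<in> I \<Longrightarrow> span_mod W S v (f i)) \<Longrightarrow> span_mod W S v (\<Sum>i\<in>I. f i)"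
  by (induction I rule: infinite_finite_induct)
    (simp_all add: span_mod_add span_mod_subspace subspace_0)

lemma span_mod_generator:
  assumes "finite S" "s \<in> S"
  shows "span_mod W S v (v s)"
proof -
  have "(\<Sum>t\<in>S. const_pol (if t = s then 1 else 0) * v t) = (\<Sum>t\<in>S. if t = s then v s else 0)"
    by (intro sum.cong refl) simp
  also have "\<dots> = v s"
    using assms by simp
  finally have "(\<Sum>t\<in>S. const_pol (if t = s then 1 else 0) * v t) = v s" .
  then have "W (v s - (\<Sum>t\<in>S. const_pol (if t = s then 1 else 0) * v t))"
    using subspace_0 by simp
  then show ?thesis unfolding span_mod_def by (rule exI[of _ "\<lambda>t. if t = s then 1 else 0"])
qed

lemma span_mod_trans:
  assumes "\<And>s. s \<in> S \<Longrightarrow> span_mod W B v (v s)" and "span_mod W S v p"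
  shows "span_mod W B v p"
proof -
  obtain c where c: "W (p - (\<Sum>s\<in>S. const_pol (c s) * v s))"
    using assms(2) unfolding span_mod_def by blast
  have "span_mod W B v (\<Sum>s\<in>S. const_pol (c s) * v s)"
    by (intro span_mod_sum span_mod_const_pol_mult assms(1))
  then have "span_mod W B v ((p - (\<Sum>s\<in>S. const_pol (c s) * v s)) + (\<Sum>s\<in>S. const_pol (c s) * v s))"
    by (rule span_mod_add[OF span_mod_subspace[OF c]])
  then show ?thesis by simp
qed

text \<open>A dependence relation among \<open>insert s B\<close> with \<open>B\<close> independent must involve \<open>s\<close>,
  which can then be solved for.\<close>
lemma span_mod_of_dependent_insert:
  assumes "finite B" "s \<notin> B" "independent_mod W B v" "\<not> independent_mod W (insert s B) v"
  shows "span_mod W B v (v s)"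
proof -
  obtain c where c: "W (\<Sum>m\<in>insert s B. const_pol (c m) * v m)" "\<exists>m\<in>insert s B. c m \<noteq> 0"
    using assms(4) unfolding independent_mod_def by blast
  have sum_insert: "(\<Sum>m\<in>insert s B. const_pol (c m) * v m) =
      const_pol (c s) * v s + (\<Sum>m\<in>B. const_pol (c m) * v m)"
    using assms(1,2) by simp
  have cs: "c s \<noteq> 0"
  proof
    assume "c s = 0"
    then have "W (\<Sum>m\<in>B. const_pol (c m) * v m)"
      using c(1) by (simp add: sum_insert)
    then have "\<forall>m\<in>B. c m = 0"
      using assms(3) unfolding independent_mod_def by blast
    then show False using c(2) \<open>c s = 0\<close> by blast
  qed
  have "const_pol (1 / c s) * (\<Sum>m\<in>insert s B. const_pol (c m) * v m) =
      v s - (\<Sum>m\<in>B. const_pol (- c m / c s) * v m)"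
    unfolding sum_insert using cs
    by (simp add: distrib_left sum_distrib_left mult.assoc[symmetric] const_pol_mult[symmetric]
        const_pol_uminus sum_negf)
  then have "W (v s - (\<Sum>m\<in>B. const_pol (- c m / c s) * v m))"
    using subspace_const_pol_mult[OF c(1), of "1 / c s"] by simp
  then show ?thesis unfolding span_mod_def by (rule exI[of _ "\<lambda>m. - c m / c s"])
qed

text \<open>A subset of maximal size among those independent modulo \<open>W\<close> is a basis modulo \<open>W\<close>.\<close>
lemma exists_basis_mod:
  assumes "finite S" "\<And>p. P p \<Longrightarrow> span_mod W S v p"
  shows "\<exists>B\<subseteq>S. independent_mod W B v \<and> (\<forall>p. P p \<longrightarrow> span_mod W B v p)"
proof -
  have "\<exists>B. (B \<subseteq> S \<and> independent_mod W B v) \<and>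
      (\<forall>B'. B' \<subseteq> S \<and> independent_mod W B' v \<longrightarrow> card B' \<le> card B)"
  proof (rule ex_has_greatest_nat[where b = "Suc (card S)"])
    show "{} \<subseteq> S \<and> independent_mod W {} v"
      by (simp add: independent_mod_def)
    show "\<forall>B. B \<subseteq> S \<and> independent_mod W B v \<longrightarrow> card B < Suc (card S)"
      using card_mono[OF assms(1)] by (simp add: less_Suc_eq_le)
  qed
  then obtain B where B: "B \<subseteq> S" "independent_mod W B v"
    and max: "\<And>B'. B' \<subseteq> S \<Longrightarrow> independent_mod W B' v \<Longrightarrow> card B' \<le> card B"
    by blast
  have "finite B" using B(1) assms(1) finite_subset by blast
  have "span_mod W B v (v s)" if "s \<in> S" for s
  proof (cases "s \<in> B")
    case True
    then show ?thesis using \<open>finite B\<close> by (rule span_mod_generator[rotated])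
  next
    case False
    have "card B < card (insert s B)"
      using \<open>finite B\<close> False by simp
    then have "\<not> independent_mod W (insert s B) v"
      using max[of "insert s B"] B(1) \<open>s \<in> S\<close> by (meson insert_subset not_le)
    then show ?thesis
      by (rule span_mod_of_dependent_insert[OF \<open>finite B\<close> False B(2)])
  qed
  then have "\<forall>p. P p \<longrightarrow> span_mod W B v p"
    using assms(2) span_mod_trans by blast
  then show ?thesis using B by blast
qed

end

lemma span_mod_mono:
  assumes "\<And>y. W y \<Longrightarrow> W' y" "span_mod W S v p"
  shows "span_mod W' S v p"
  using assms unfolding span_mod_def by blast

section \<open>The ideal \<open>I_\<Delta> + (\<theta>_1, \<dots>, \<theta>_d)\<close>\<close>

definition down_closed :: "nat set set \<Rightarrow> bool" where
  "down_closed \<Delta> \<longleftrightarrow> (\<forall>F\<in>\<Delta>. \<forall>G. G \<subseteq> F \<longrightarrow> G \<in> \<Delta>)"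

definition in_SR_ideal :: "nat set set \<Rightarrow> 'K::comm_ring_1 pol \<Rightarrow> bool" where
  "in_SR_ideal \<Delta> r \<longleftrightarrow> (\<forall>m\<in>Poly_Mapping.keys r. supp m \<notin> \<Delta>)"

lemma in_SR_ideal_add: "in_SR_ideal \<Delta> a \<Longrightarrow> in_SR_ideal \<Delta> b \<Longrightarrow> in_SR_ideal \<Delta> (a + b)"
  unfolding in_SR_ideal_def using keys_add[of a b] by auto

lemma in_SR_ideal_hcomp: "in_SR_ideal \<Delta> a \<Longrightarrow> in_SR_ideal \<Delta> (hcomp q a)"
  unfolding in_SR_ideal_def using keys_hcomp by blast

lemma in_SR_ideal_single: "supp m \<notin> \<Delta> \<Longrightarrow> in_SR_ideal \<Delta> (Poly_Mapping.single m c)"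
  unfolding in_SR_ideal_def by simp

lemma in_SR_ideal_mult:
  assumes "down_closed \<Delta>" "in_SR_ideal \<Delta> r"
  shows "in_SR_ideal \<Delta> (r * z)"
  unfolding in_SR_ideal_def
proof
  fix m assume "m \<in> Poly_Mapping.keys (r * z)"
  then obtain a b where "m = a + b" "a \<in> Poly_Mapping.keys r"
    using keys_mult by blast
  then show "supp m \<notin> \<Delta>"
    using assms unfolding down_closed_def in_SR_ideal_def by (auto simp: supp_add)
qed

lemma in_I_iff:
  "in_I T n d \<Delta> p \<longleftrightarrow> (\<exists>g. in_SR_ideal \<Delta> (p - (\<Sum>i = 1..d. theta n i * g i)))"
  by (simp add: in_I_def in_SR_ideal_def)

lemma in_I_theta_comb_plus:
  "in_SR_ideal \<Delta> r \<Longrightarrow> in_I T n d \<Delta> ((\<Sum>i = 1..d. theta n i * g i) + r)"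
  unfolding in_I_iff by (rule exI[of _ g]) simp

lemma in_I_SR_ideal: "in_SR_ideal \<Delta> r \<Longrightarrow> in_I T n d \<Delta> r"
  using in_I_theta_comb_plus[of \<Delta> r T n d "\<lambda>_. 0"] by simp

lemma in_I_theta_comb: "in_I T n d \<Delta> (\<Sum>i = 1..d. theta n i * g i)"
  using in_I_theta_comb_plus[of \<Delta> 0 T n d g] by (simp add: in_SR_ideal_def)

lemma in_I_add:
  assumes "in_I T n d \<Delta> p" "in_I T n d \<Delta> p'"
  shows "in_I T n d \<Delta> (p + p')"
proof -
  obtain g where g: "in_SR_ideal \<Delta> (p - (\<Sum>i = 1..d. theta n i * g i))"
    using assms(1) unfolding in_I_iff by blast
  obtain g' where g': "in_SR_ideal \<Delta> (p' - (\<Sum>i = 1..d. theta n i * g' i))"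
    using assms(2) unfolding in_I_iff by blast
  have "p + p' - (\<Sum>i = 1..d. theta n i * (g i + g' i)) =
      (p - (\<Sum>i = 1..d. theta n i * g i)) + (p' - (\<Sum>i = 1..d. theta n i * g' i))"
    by (simp add: distrib_left sum.distrib)
  also have "in_SR_ideal \<Delta> \<dots>"
    by (rule in_SR_ideal_add[OF g g'])
  finally show ?thesis
    unfolding in_I_iff by (rule exI[of _ "\<lambda>i. g i + g' i"])
qed

lemma in_I_mult:
  assumes "down_closed \<Delta>" "in_I T n d \<Delta> p"
  shows "in_I T n d \<Delta> (p * z)"
proof -
  obtain g where g: "in_SR_ideal \<Delta> (p - (\<Sum>i = 1..d. theta n i * g i))"
    using assms(2) unfolding in_I_iff by blast
  have "p * z - (\<Sum>i = 1..d. theta n i * (g i * z)) = (p - (\<Sum>i = 1..d. theta n i * g i)) * z"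
    by (simp add: left_diff_distrib sum_distrib_right mult.assoc)
  also have "in_SR_ideal \<Delta> \<dots>"
    by (rule in_SR_ideal_mult[OF assms(1) g])
  finally show ?thesis
    unfolding in_I_iff by (rule exI[of _ "\<lambda>i. g i * z"])
qed

lemma pol_subspace_in_I: "down_closed \<Delta> \<Longrightarrow> pol_subspace (in_I T n d \<Delta>)"
  unfolding pol_subspace_def
  using in_I_SR_ideal[of \<Delta> 0] in_I_add in_I_mult[of \<Delta> T n d _ "const_pol _"]
  by (auto simp: in_SR_ideal_def mult.commute)

lemma in_I_hcomp:
  assumes "q \<ge> 1" "in_I T n d \<Delta> p"
  shows "in_I T n d \<Delta> (hcomp q p)"
proof -
  obtain g where g: "in_SR_ideal \<Delta> (p - (\<Sum>i = 1..d. theta n i * g i))"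
    using assms(2) unfolding in_I_iff by blast
  have "hcomp q p - (\<Sum>i = 1..d. theta n i * hcomp (q - 1) (g i)) =
      hcomp q (p - (\<Sum>i = 1..d. theta n i * g i))"
    using assms(1) by (simp add: hcomp_diff hcomp_sum hcomp_theta_mult)
  also have "in_SR_ideal \<Delta> \<dots>"
    by (rule in_SR_ideal_hcomp[OF g])
  finally show ?thesis
    unfolding in_I_iff by (rule exI[of _ "\<lambda>i. hcomp (q - 1) (g i)"])
qed

section \<open>Generic minors\<close>

definition coeff_var :: "nat \<Rightarrow> nat \<Rightarrow> 'k::field coeffpoly" where
  "coeff_var i j = Poly_Mapping.single (Poly_Mapping.single (i, j) 1) 1"

lemma indet_eq_to_fract: "indet i j = to_fract (coeff_var i j)"
  by (simp add: indet_def coeff_var_def to_fract_def)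

lemma prod_single_1:
  "(\<Prod>i\<in>I. Poly_Mapping.single (e i) (1::'b::comm_semiring_1)) = Poly_Mapping.single (\<Sum>i\<in>I. e i) 1"
  by (induction I rule: infinite_finite_induct) (auto simp: mult_single)

text \<open>Exponent vector of the term \<open>\<Prod>_i a_(i+1, gs ! p i)\<close> of the Leibniz expansion.\<close>
definition perm_exponent :: "nat list \<Rightarrow> (nat \<Rightarrow> nat) \<Rightarrow> (nat \<times> nat) \<Rightarrow>\<^sub>0 nat" where
  "perm_exponent gs p = (\<Sum>i = 0..<length gs. Poly_Mapping.single (i + 1, gs ! p i) 1)"

lemma lookup_perm_exponent:
  assumes "distinct gs" "p permutes {0..<length gs}" "i < length gs" "j < length gs"
  shows "Poly_Mapping.lookup (perm_exponent gs p) (i + 1, gs ! j) = (if p i = j then 1 else 0)"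
proof -
  have "Poly_Mapping.lookup (perm_exponent gs p) (i + 1, gs ! j) =
      (\<Sum>i' = 0..<length gs. if i' = i \<and> p i = j then 1 else 0)"
    unfolding perm_exponent_def lookup_sum
  proof (intro sum.cong refl)
    fix i' assume "i' \<in> {0..<length gs}"
    then have "p i' < length gs"
      using permutes_in_image[OF assms(2)] by simp
    then have "(gs ! p i' = gs ! j) = (p i' = j)"
      using nth_eq_iff_index_eq[OF assms(1)] assms(4) by blast
    then show "Poly_Mapping.lookup (Poly_Mapping.single (i' + 1, gs ! p i') 1) (i + 1, gs ! j) =
        (if i' = i \<and> p i = j then 1 else 0)"
      by (auto simp: lookup_single when_def)
  qed
  also have "\<dots> = (if p i = j then 1 else 0)"
    using assms(3) by (simp add: sum.delta' if_distrib cong: if_cong)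
  finally show ?thesis .
qed

lemma perm_exponent_eq_id:
  assumes "distinct gs" "p permutes {0..<length gs}" "perm_exponent gs p = perm_exponent gs id"
  shows "p = id"
proof
  fix i
  show "p i = id i"
  proof (cases "i < length gs")
    case True
    then have "p i < length gs" using permutes_in_image[OF assms(2)] by simp
    then show ?thesis
      using assms(3) lookup_perm_exponent[OF assms(1,2) True] True
        lookup_perm_exponent[OF assms(1) permutes_id True, of "p i"]
      by (metis id_apply zero_neq_one)
  next
    case False
    then show ?thesis using permutes_not_in[OF assms(2)] by simp
  qed
qed

text \<open>In the Leibniz expansion of the generic minor, the monomial of the diagonal occurs only
  once, with coefficient \<open>1\<close>.\<close>
lemma det_generic_minor_nonzero:
  assumes "distinct gs"
  shows "det (mat (length gs) (length gs) (\<lambda>(i, m). indet (i + 1) (gs ! m))) \<noteq> (0 :: 'k::field KK)"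
proof -
  let ?r = "length gs"
  let ?M = "mat ?r ?r (\<lambda>(i, m). coeff_var (i + 1) (gs ! m)) :: 'k coeffpoly mat"
  interpret inj_comm_ring_hom "to_fract :: 'k coeffpoly \<Rightarrow> _"
    by unfold_locales auto
  have "det ?M = (\<Sum>p\<in>{p. p permutes {0..<?r}}. of_int (sign p) * (\<Prod>i = 0..<?r. ?M $$ (i, p i)))"
    by (rule det_def') simp
  also have "\<dots> = (\<Sum>p\<in>{p. p permutes {0..<?r}}. Poly_Mapping.single (perm_exponent gs p) (of_int (sign p)))"
  proof (intro sum.cong refl)
    fix p assume "p \<in> {p. p permutes {0..<?r}}"
    then have "(\<Prod>i = 0..<?r. ?M $$ (i, p i)) =
        (\<Prod>i = 0..<?r. Poly_Mapping.single (Poly_Mapping.single (i + 1, gs ! p i) 1) 1)"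
      by (intro prod.cong refl) (auto simp: coeff_var_def permutes_in_image)
    then show "of_int (sign p) * (\<Prod>i = 0..<?r. ?M $$ (i, p i)) =
        Poly_Mapping.single (perm_exponent gs p) (of_int (sign p))"
      by (simp flip: single_of_int add: prod_single_1 perm_exponent_def mult_single)
  qed
  finally have "Poly_Mapping.lookup (det ?M) (perm_exponent gs id) =
      (\<Sum>p\<in>{p. p permutes {0..<?r}}. Poly_Mapping.lookup (Poly_Mapping.single (perm_exponent gs p) (of_int (sign p))) (perm_exponent gs id))"
    by (simp add: lookup_sum)
  also have "\<dots> = (\<Sum>p\<in>{p. p permutes {0..<?r}}. if p = id then 1 else 0)"
    using perm_exponent_eq_id[OF assms]
    by (intro sum.cong refl) (auto simp: lookup_single when_def)
  also have "\<dots> = 1"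
    by (simp add: sum.delta finite_permutations permutes_id)
  finally have "det ?M \<noteq> 0" by auto
  moreover have "mat ?r ?r (\<lambda>(i, m). indet (i + 1) (gs ! m)) = map_mat to_fract ?M"
    by (auto simp: indet_eq_to_fract)
  ultimately show ?thesis by (simp add: hom_det)
qed

lemma exists_left_inverse_mat:
  assumes "A \<in> carrier_mat r r" "det A \<noteq> (0 :: 'a::field)"
  shows "\<exists>B. B \<in> carrier_mat r r \<and> B * A = 1\<^sub>m r"
  using det_non_zero_imp_unit[OF assms, of "()"] unfolding Units_def ring_mat_def by auto

text \<open>\<open>C\<close> is row \<open>j\<close> of a left inverse of the generic minor on the columns \<open>F\<close>.\<close>
lemma exists_coeffs_dual_to_face:
  assumes "finite F" "card F \<le> d" "j \<in> F"
  shows "\<exists>C. \<forall>l\<in>F. (\<Sum>i = 1..d. C i * indet i l) = (if l = j then 1 else (0 :: 'k::field KK))"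
proof -
  define gs where "gs = sorted_list_of_set F"
  define r where "r = card F"
  have gs: "distinct gs" "length gs = r" "set gs = F"
    unfolding gs_def r_def using assms(1) by simp_all
  define A :: "'k KK mat" where "A = mat r r (\<lambda>(i, m). indet (i + 1) (gs ! m))"
  have A: "A \<in> carrier_mat r r" by (simp add: A_def)
  have "det A \<noteq> 0"
    unfolding A_def using det_generic_minor_nonzero[OF gs(1)] gs(2) by simp
  then obtain B where B: "B \<in> carrier_mat r r" "B * A = 1\<^sub>m r"
    using exists_left_inverse_mat[OF A] by blast
  obtain m0 where m0: "m0 < r" "gs ! m0 = j"
    using assms(3) gs(2,3) in_set_conv_nth[of j gs] by auto
  define C where "C i = (if 1 \<le> i \<and> i \<le> r then B $$ (m0, i - 1) else 0)" for i
  have "(\<Sum>i = 1..d. C i * indet i l) = (if l = j then 1 else 0)" if "l \<in> F" for l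
  proof -
    obtain m where m: "m < r" "gs ! m = l"
      using \<open>l \<in> F\<close> gs(2,3) in_set_conv_nth[of l gs] by auto
    have "(\<Sum>i = 1..d. C i * indet i l) = (\<Sum>i = 1..r. C i * indet i l)"
      using assms(2) by (intro sum.mono_neutral_right) (auto simp: C_def r_def)
    also have "\<dots> = (\<Sum>i<r. C (Suc i) * indet (Suc i) l)"
      by (simp add: sum.atLeast1_atMost_eq)
    also have "\<dots> = (B * A) $$ (m0, m)"
      using B(1) A m0(1) m by (simp add: scalar_prod_def A_def C_def lessThan_atLeast0)
    also have "\<dots> = (if l = j then 1 else 0)"
      using B(2) m0 m nth_eq_iff_index_eq[OF gs(1), of m0 m] gs(2) by auto
    finally show ?thesis .
  qed
  then show ?thesis by blast
qed

lemma var_congruent_vars_off_face: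
  assumes "finite F" "F \<subseteq> {1..n}" "card F \<le> d" "j \<in> F"
  shows "\<exists>b. in_I TYPE('k::field) n d \<Delta> (var j - (\<Sum>l\<in>{1..n} - F. const_pol (b l) * var l))"
proof -
  obtain C :: "nat \<Rightarrow> 'k KK" where C: "\<And>l. l \<in> F \<Longrightarrow> (\<Sum>i = 1..d. C i * indet i l) = (if l = j then 1 else 0)"
    using exists_coeffs_dual_to_face[OF assms(1,3,4)] by blast
  define b where "b l = - (\<Sum>i = 1..d. C i * indet i l)" for l
  have "(\<Sum>i = 1..d. theta n i * const_pol (C i)) =
      (\<Sum>i = 1..d. \<Sum>l = 1..n. const_pol (C i * indet i l) * var l)"
    unfolding theta_def by (simp add: sum_distrib_left sum_distrib_right const_pol_mult mult_ac)
  also have "\<dots> = (\<Sum>l = 1..n. const_pol (\<Sum>i = 1..d. C i * indet i l) * var l)"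
    by (subst sum.swap) (simp add: const_pol_sum sum_distrib_right)
  also have "\<dots> = (\<Sum>l\<in>F. const_pol (\<Sum>i = 1..d. C i * indet i l) * var l)
      - (\<Sum>l\<in>{1..n} - F. const_pol (b l) * var l)"
    using sum.subset_diff[OF assms(2), of "\<lambda>l. const_pol (\<Sum>i = 1..d. C i * indet i l) * var l"]
    by (simp add: b_def const_pol_uminus sum_negf add.commute)
  also have "(\<Sum>l\<in>F. const_pol (\<Sum>i = 1..d. C i * indet i l) * var l) = (\<Sum>l\<in>F. if l = j then var j else 0)"
    using C by (intro sum.cong refl) simp
  also have "\<dots> = var j"
    using assms(1,4) by simp
  finally have "var j - (\<Sum>l\<in>{1..n} - F. const_pol (b l) * var l) =
      (\<Sum>i = 1..d. theta n i * const_pol (C i))" ..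
  then have "in_I TYPE('k) n d \<Delta> (var j - (\<Sum>l\<in>{1..n} - F. const_pol (b l) * var l))"
    by (simp only: in_I_theta_comb)
  then show ?thesis by (rule exI[of _ b])
qed

definition monoms_off_face :: "nat set set \<Rightarrow> nat set \<Rightarrow> nat \<Rightarrow> (nat \<Rightarrow>\<^sub>0 nat) set" where
  "monoms_off_face \<Delta> F q = {m. supp m \<in> \<Delta> \<and> supp m \<inter> F = {} \<and> mdeg m = q}"

lemma finite_monoms_off_face:
  assumes "\<forall>G\<in>\<Delta>. G \<subseteq> {1..n}"
  shows "finite (monoms_off_face \<Delta> F q)"
proof -
  let ?E = "{f. \<forall>x. (x \<in> {1..n} \<longrightarrow> f x \<in> {0..q}) \<and> (x \<notin> {1..n} \<longrightarrow> f x = (0::nat))}"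
  have "Poly_Mapping.lookup ` monoms_off_face \<Delta> F q \<subseteq> ?E"
  proof
    fix f assume "f \<in> Poly_Mapping.lookup ` monoms_off_face \<Delta> F q"
    then obtain m where m: "m \<in> monoms_off_face \<Delta> F q" "f = Poly_Mapping.lookup m"
      by blast
    then have "supp m \<subseteq> {1..n}" "\<And>x. Poly_Mapping.lookup m x \<le> q"
      using assms lookup_le_mdeg[of m] unfolding monoms_off_face_def by auto
    then show "f \<in> ?E"
      using m(2) unfolding supp_def by (auto simp: in_keys_iff)
  qed
  moreover have "finite ?E"
    by (rule finite_set_of_finite_funs) auto
  moreover have "inj_on Poly_Mapping.lookup (monoms_off_face \<Delta> F q)"
    by (rule inj_onI) (simp add: poly_mapping_eqI)
  ultimately show ?thesis
    using finite_subset finite_imageD by blast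
qed

definition face_deg :: "nat set \<Rightarrow> (nat \<Rightarrow>\<^sub>0 nat) \<Rightarrow> nat" where
  "face_deg F m = (\<Sum>j\<in>F. Poly_Mapping.lookup m j)"

lemma face_deg_add: "face_deg F (a + b) = face_deg F a + face_deg F b"
  by (simp add: face_deg_def lookup_add sum.distrib)

lemma face_deg_single: "finite F \<Longrightarrow> face_deg F (Poly_Mapping.single l k) = (if l \<in> F then k else 0)"
  by (simp add: face_deg_def lookup_single when_def sum.delta)

lemma face_deg_eq_0_iff: "finite F \<Longrightarrow> face_deg F m = 0 \<longleftrightarrow> supp m \<inter> F = {}"
  by (auto simp: face_deg_def supp_def in_keys_iff)

lemma monom_congruent_monoms_off_face:
  assumes "down_closed \<Delta>" "finite F" "F \<subseteq> {1..n}" "card F \<le> d" "j \<in> F"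
  shows "\<exists>b. in_I TYPE('k::field) n d \<Delta> (monom (Poly_Mapping.single j 1 + m) -
    (\<Sum>l\<in>{1..n} - F. const_pol (b l) * monom (Poly_Mapping.single l 1 + m)))"
proof -
  obtain b where b: "in_I TYPE('k) n d \<Delta> (var j - (\<Sum>l\<in>{1..n} - F. const_pol (b l) * var l))"
    using var_congruent_vars_off_face[OF assms(2-5)] by blast
  have "monom (Poly_Mapping.single j 1 + m) -
      (\<Sum>l\<in>{1..n} - F. const_pol (b l) * monom (Poly_Mapping.single l 1 + m)) =
      (var j - (\<Sum>l\<in>{1..n} - F. const_pol (b l) * var l)) * (monom m :: 'k KK pol)"
    by (simp add: monom_add var_eq_monom left_diff_distrib sum_distrib_right mult.assoc)
  also have "in_I TYPE('k) n d \<Delta> \<dots>"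
    by (rule in_I_mult[OF assms(1) b])
  finally show ?thesis
    by (rule exI[of _ b])
qed

text \<open>Each step of the induction on the \<open>F\<close>-degree trades one variable \<open>x_j\<close>, \<open>j \<in> F\<close>, for
  variables outside \<open>F\<close>; monomials supported on nonfaces vanish.\<close>
lemma monom_span_mod_I:
  assumes D: "down_closed \<Delta>" and V: "\<forall>G\<in>\<Delta>. G \<subseteq> {1..n}"
    and F: "finite F" "F \<subseteq> {1..n}" "card F \<le> d" and q: "mdeg m = q"
  shows "span_mod (in_I TYPE('k::field) n d \<Delta>) (monoms_off_face \<Delta> F q) monom (monom m :: 'k KK pol)"
  using q
proof (induction "face_deg F m" arbitrary: m)
  case 0
  show ?case
  proof (cases "supp m \<in> \<Delta>")
    case True
    then have "m \<in> monoms_off_face \<Delta> F q"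
      using 0 face_deg_eq_0_iff[OF F(1)] by (simp add: monoms_off_face_def)
    then show ?thesis
      by (intro span_mod_generator pol_subspace_in_I D finite_monoms_off_face[OF V])
  next
    case False
    then show ?thesis
      unfolding monom_def
      by (intro span_mod_subspace pol_subspace_in_I D in_I_SR_ideal in_SR_ideal_single)
  qed
next
  case (Suc k)
  show ?case
  proof (cases "supp m \<in> \<Delta>")
    case False
    then show ?thesis
      unfolding monom_def
      by (intro span_mod_subspace pol_subspace_in_I D in_I_SR_ideal in_SR_ideal_single)
  next
    case True
    obtain j where j: "j \<in> F" "Poly_Mapping.lookup m j \<noteq> 0"
      using Suc.hyps(2) unfolding face_deg_def by (metis sum.neutral nat.simps(3))
    define m' where "m' = m - Poly_Mapping.single j 1"
    have m: "m = Poly_Mapping.single j 1 + m'"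
      unfolding m'_def using j(2)
      by (intro poly_mapping_eqI) (auto simp: lookup_add lookup_minus lookup_single when_def)
    obtain b where b: "in_I TYPE('k) n d \<Delta> (monom m -
        (\<Sum>l\<in>{1..n} - F. const_pol (b l) * monom (Poly_Mapping.single l 1 + m')))"
      using monom_congruent_monoms_off_face[OF D F j(1), of m'] m by auto
    have "span_mod (in_I TYPE('k) n d \<Delta>) (monoms_off_face \<Delta> F q) monom
        (monom (Poly_Mapping.single l 1 + m') :: 'k KK pol)" if "l \<in> {1..n} - F" for l
    proof (rule Suc.hyps(1))
      show "k = face_deg F (Poly_Mapping.single l 1 + m')"
        using Suc.hyps(2) that j(1) F(1) unfolding m by (simp add: face_deg_add face_deg_single)
      show "mdeg (Poly_Mapping.single l 1 + m') = q"
        using Suc.prems unfolding m by (simp add: mdeg_add)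
    qed
    then have "span_mod (in_I TYPE('k) n d \<Delta>) (monoms_off_face \<Delta> F q) monom
        (\<Sum>l\<in>{1..n} - F. const_pol (b l) * monom (Poly_Mapping.single l 1 + m') :: 'k KK pol)"
      by (intro span_mod_sum span_mod_const_pol_mult pol_subspace_in_I D)
    then show ?thesis
      by (rule span_mod_of_diff[OF pol_subspace_in_I[OF D] b])
  qed
qed

lemma homog_span_mod_I:
  assumes "down_closed \<Delta>" "\<forall>G\<in>\<Delta>. G \<subseteq> {1..n}" "finite F" "F \<subseteq> {1..n}" "card F \<le> d"
    and "homog q p"
  shows "span_mod (in_I TYPE('k::field) n d \<Delta>) (monoms_off_face \<Delta> F q) monom (p :: 'k KK pol)"
proof -
  have "span_mod (in_I TYPE('k) n d \<Delta>) (monoms_off_face \<Delta> F q) monom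
      (\<Sum>m\<in>Poly_Mapping.keys p. const_pol (Poly_Mapping.lookup p m) * monom m :: 'k KK pol)"
    using assms unfolding homog_def
    by (intro span_mod_sum span_mod_const_pol_mult pol_subspace_in_I monom_span_mod_I) auto
  then show ?thesis
    by (simp flip: pol_eq_sum_monoms)
qed

section \<open>The Gorenstein quotient\<close>

lemma pol_subspace_gor:
  assumes add: "\<forall>p p'. homog d p \<longrightarrow> homog d p' \<longrightarrow> deg (p + p') = deg p + deg p'"
    and smult: "\<forall>c p. homog d p \<longrightarrow> deg (const_pol c * p) = c * deg p"
  shows "pol_subspace (gor d deg)"
  unfolding pol_subspace_def
proof (intro conjI allI impI)
  have "deg 0 = 0"
    using smult[rule_format, of 0 0] by (simp add: homog_def)
  then show "gor d deg 0"
    by (simp add: gor_def)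
  show "gor d deg (a + b)" if "gor d deg a" "gor d deg b" for a b
    unfolding gor_def
  proof
    fix z
    have "deg (hcomp d ((a + b) * z)) = deg (hcomp d (a * z)) + deg (hcomp d (b * z))"
      unfolding distrib_right hcomp_add using add homog_hcomp by blast
    then show "deg (hcomp d ((a + b) * z)) = 0"
      using that by (simp add: gor_def)
  qed
  show "gor d deg (const_pol c * a)" if "gor d deg a" for c a
    unfolding gor_def
  proof
    fix z
    have "deg (hcomp d (const_pol c * a * z)) = c * deg (hcomp d (a * z))"
      unfolding mult.assoc hcomp_const_pol_mult using smult homog_hcomp by blast
    then show "deg (hcomp d (const_pol c * a * z)) = 0"
      using that by (simp add: gor_def)
  qed
qed

lemma gor_of_in_I:
  assumes "down_closed \<Delta>" "d \<ge> 1"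
    and "\<forall>p. homog d p \<longrightarrow> (deg p = 0 \<longleftrightarrow> in_I TYPE('k::field) n d \<Delta> p)"
    and "in_I TYPE('k) n d \<Delta> y"
  shows "gor d deg y"
  unfolding gor_def
proof
  fix z
  have "in_I TYPE('k) n d \<Delta> (hcomp d (y * z))"
    using assms(1,2,4) by (intro in_I_hcomp in_I_mult)
  then show "deg (hcomp d (y * z)) = 0"
    using assms(3) homog_hcomp by blast
qed

theorem lemma4p8:
  fixes \<Delta> :: "nat set set" and n d q :: nat and eps :: "nat set \<Rightarrow> int"
    and deg :: "('k::field KK) pol \<Rightarrow> 'k KK" and F :: "nat set"
  assumes "d \<ge> 2"
    and "homology_manifold TYPE('k) d n \<Delta>"
    and "oriented TYPE('k) d \<Delta> eps"
    and "\<forall>p p'. homog d p \<longrightarrow> homog d p' \<longrightarrow> deg (p + p') = deg p + deg p'"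
    and "\<forall>c p. homog d p \<longrightarrow> deg (const_pol c * p) = c * deg p"
    and "\<forall>p. homog d p \<longrightarrow> (deg p = 0 \<longleftrightarrow> in_I TYPE('k) n d \<Delta> p)"
    and "\<forall>G. facet \<Delta> G \<longrightarrow> deg (xG G) = of_int (eps G) / bracket d G"
    and "facet \<Delta> F"
  shows "\<exists>B. finite B \<and> (\<forall>m\<in>B. supp m \<in> \<Delta> \<and> supp m \<inter> F = {} \<and> mdeg m = q) \<and>
    (\<forall>c. gor d deg (\<Sum>m\<in>B. const_pol (c m) * monom m) \<longrightarrow> (\<forall>m\<in>B. c m = 0)) \<and>
    (\<forall>p. homog q p \<longrightarrow> (\<exists>c. gor d deg (p - (\<Sum>m\<in>B. const_pol (c m) * monom m))))"
proof -
  have D: "down_closed \<Delta>" and V: "\<forall>G\<in>\<Delta>. G \<subseteq> {1..n}" and "\<forall>G\<in>\<Delta>. card G \<le> d"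
    using assms(2) by (auto simp: homology_manifold_def simplicial_complex_def down_closed_def)
  moreover have "F \<in> \<Delta>"
    using assms(8) by (simp add: facet_def)
  ultimately have F: "finite F" "F \<subseteq> {1..n}" "card F \<le> d"
    using finite_subset[of F "{1..n}"] by auto
  have I_gor: "gor d deg y" if "in_I TYPE('k) n d \<Delta> y" for y
    using gor_of_in_I[OF D _ assms(6) that] assms(1) by simp
  have "span_mod (gor d deg) (monoms_off_face \<Delta> F q) monom p" if "homog q p" for p
    by (rule span_mod_mono[OF I_gor homog_span_mod_I[OF D V F that]])
  then have "\<exists>B\<subseteq>monoms_off_face \<Delta> F q. independent_mod (gor d deg) B monom \<and>
      (\<forall>p. homog q p \<longrightarrow> span_mod (gor d deg) B monom p)"
    by (rule exists_basis_mod[OF pol_subspace_gor[OF assms(4,5)] finite_monoms_off_face[OF V]])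
  then obtain B where B: "B \<subseteq> monoms_off_face \<Delta> F q" "independent_mod (gor d deg) B monom"
      "\<forall>p. homog q p \<longrightarrow> span_mod (gor d deg) B monom p"
    by blast
  have "finite B"
    using finite_subset[OF B(1) finite_monoms_off_face[OF V]] .
  moreover have "\<forall>m\<in>B. supp m \<in> \<Delta> \<and> supp m \<inter> F = {} \<and> mdeg m = q"
    using B(1) by (auto simp: monoms_off_face_def)
  ultimately show ?thesis
    using B(2,3) unfolding independent_mod_def span_mod_def by blast
qed

end
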